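(* Let $\mathcal{C}$ be a covering of a finite set $E$ and let $K\in\mathcal{C}$ be reducible in $\mathcal{C}$. If $XH$ induced by $\mathcal{C}$ is the closure operator of a matroid on $E$, then $XH$ induced by $\mathcal{C}-\{K\}$ is also the closure operator of a matroid on $E$, and $\mathcal{I}_{XH}(\mathcal{C})=\mathcal{I}_{XH}(\mathcal{C}-\{K\})$ and $\mathcal{L}_{XH}(M(\mathcal{C}))=\mathcal{L}_{XH}(M(\mathcal{C}-\{K\}))$.
   Context: A covering of $E$ is a family of nonempty subsets of $E$ with union $E$. $K\in\mathcal{C}$ is reducible in $\mathcal{C}$ if $K$ is a union of some sets in $\mathcal{C}-\{K\}$. For a covering $\mathcal{D}$ and $x\in E$, $N_{\mathcal{D}}(x)=\bigcap\{K\in\mathcal{D}:x\in K\}$ and $XH$ induced by $\mathcal{D}$ is $XH(X)=\{x:N_{\mathcal{D}}(x)\cap X\neq\emptyset\}$. When $XH$ induced by $\mathcal{D}$ is the closure operator of a matroid (closure $cl(X)=\{a:r(X\cup\{a\})=r(X)\}$), $\mathcal{I}_{XH}(\mathcal{D})=\{I\subseteq E:x\notin XH(I-\{x\})\ \forall x\in I\}$ is its family of independent sets and $\mathcal{L}_{XH}(M(\mathcal{D}))=\{X:XH(X)=X\}$ its set of closed sets. *)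

theory Defs
  imports Main
begin

definition covering :: "'a set \<Rightarrow> 'a set set \<Rightarrow> bool" where
  "covering E C \<longleftrightarrow> (\<forall>K\<in>C. K \<noteq> {} \<and> K \<subseteq> E) \<and> \<Union>C = E"

definition reducible :: "'a set set \<Rightarrow> 'a set \<Rightarrow> bool" where
  "reducible C K \<longleftrightarrow> K \<in> C \<and> (\<exists>S. S \<subseteq> C - {K} \<and> K = \<Union>S)"

definition nbhd :: "'a set set \<Rightarrow> 'a \<Rightarrow> 'a set" where
  "nbhd D x = \<Inter>{K \<in> D. x \<in> K}"

definition XH :: "'a set \<Rightarrow> 'a set set \<Rightarrow> 'a set \<Rightarrow> 'a set" where
  "XH E D X = {x \<in> E. nbhd D x \<inter> X \<noteq> {}}"

definition indep_matroid :: "'a set \<Rightarrow> 'a set set \<Rightarrow> bool" where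
  "indep_matroid E I \<longleftrightarrow> finite E \<and> I \<subseteq> Pow E \<and> {} \<in> I
     \<and> (\<forall>X Y. Y \<in> I \<and> X \<subseteq> Y \<longrightarrow> X \<in> I)
     \<and> (\<forall>X Y. X \<in> I \<and> Y \<in> I \<and> card X < card Y \<longrightarrow> (\<exists>e\<in>Y - X. insert e X \<in> I))"

definition mrank :: "'a set set \<Rightarrow> 'a set \<Rightarrow> nat" where
  "mrank I X = Max (card ` {Y. Y \<subseteq> X \<and> Y \<in> I})"

definition mclosure :: "'a set \<Rightarrow> 'a set set \<Rightarrow> 'a set \<Rightarrow> 'a set" where
  "mclosure E I X = {a \<in> E. mrank I (X \<union> {a}) = mrank I X}"

definition is_matroid_closure :: "'a set \<Rightarrow> ('a set \<Rightarrow> 'a set) \<Rightarrow> bool" where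
  "is_matroid_closure E f \<longleftrightarrow>
     (\<exists>I. indep_matroid E I \<and> (\<forall>X\<subseteq>E. f X = mclosure E I X))"

definition I_XH :: "'a set \<Rightarrow> 'a set set \<Rightarrow> 'a set set" where
  "I_XH E D = {I. I \<subseteq> E \<and> (\<forall>x\<in>I. x \<notin> XH E D (I - {x}))}"

definition L_XH :: "'a set \<Rightarrow> 'a set set \<Rightarrow> 'a set set" where
  "L_XH E D = {X. X \<subseteq> E \<and> XH E D X = X}"

end

theory Submission
  imports Defs
begin

text \<open>Removing a reducible block K does not change any neighbourhood: if x \<in> K, then
  some block K' \<subseteq> K of C - {K} contains x, so intersecting with K as well changes nothing.
  Hence XH, and with it everything defined from XH, is unchanged.\<close>

lemma nbhd_Diff_reducible:
  assumes "reducible C K"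
  shows "nbhd (C - {K}) x = nbhd C x"
proof (cases "x \<in> K")
  case False
  then have "{A \<in> C - {K}. x \<in> A} = {A \<in> C. x \<in> A}" by auto
  then show ?thesis by (simp add: nbhd_def)
next
  case True
  from assms obtain S where "K \<in> C" "S \<subseteq> C - {K}" "K = \<Union>S"
    unfolding reducible_def by blast
  with True obtain K' where K': "K' \<in> C - {K}" "x \<in> K'" "K' \<subseteq> K" by blast
  have blocks: "{A \<in> C. x \<in> A} = insert K {A \<in> C - {K}. x \<in> A}"
    using \<open>K \<in> C\<close> True by auto
  have "\<Inter>{A \<in> C - {K}. x \<in> A} \<subseteq> K" using K' by blast
  then show ?thesis unfolding nbhd_def blocks by blast
qed

lemma XH_Diff_reducible:
  assumes "reducible C K"
  shows "XH E (C - {K}) = XH E C"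
  by (rule ext) (simp add: XH_def nbhd_Diff_reducible[OF assms])

theorem theorem17:
  fixes E :: "'a set" and C :: "'a set set" and K :: "'a set"
  assumes "finite E"
    and "covering E C"
    and "reducible C K"
    and "is_matroid_closure E (XH E C)"
  shows "is_matroid_closure E (XH E (C - {K}))
         \<and> I_XH E C = I_XH E (C - {K})
         \<and> L_XH E C = L_XH E (C - {K})"
  using assms(4) by (simp add: I_XH_def L_XH_def XH_Diff_reducible[OF assms(3)])

end
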